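(* Let $\Sigma(s,l)$ be a continuous function of $s\in\mathbb R$ and future null vectors $l=o\bar o$, homogeneous in the sense $\Sigma(\alpha\bar\alpha s,\alpha o,\bar\alpha\bar o)=(\alpha\bar\alpha)^{-2}\Sigma(s,o,\bar o)$, such that $|\Sigma(s,l)|$ is bounded by a polynomial in $s$ (in the $t$-gauge for some unit timelike future-pointing $t$), and such that $$\int\Sigma(x\cdot l,l)\,d^2l=0\qquad\text{for all points }x\text{ of Minkowski space}.$$ Then $\Sigma(s,l)=\sum_{k=0}^N s^k\Sigma_k(l)$ for some $N<\infty$, and for each $k$, $\int l_{a_1}\cdots l_{a_k}\Sigma_k(l)\,d^2l=0$.
   Context: Minkowski space with signature $(+,-,-,-)$; null vectors $l^a=o^A\bar o^{A'}$ parametrized by spinors, functions invariant under $o\mapsto e^{i\theta}o$; the $t$-gauge means $t\cdot l=1$. For $g$ homogeneous of degree $-2$ in $l$, $\int g\,d^2l$ is the integral over the unit sphere $\{t\cdot l=1\}$ with the rotation-invariant area measure, independent of $t$. *)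

theory Defs
  imports "HOL-Analysis.Analysis" "HOL-Computational_Algebra.Polynomial"
begin

definition mdot :: "real^4 \<Rightarrow> real^4 \<Rightarrow> real" where
  "mdot x y = x$1 * y$1 - x$2 * y$2 - x$3 * y$3 - x$4 * y$4"

definition future_null :: "(real^4) set" where
  "future_null = {l. mdot l l = 0 \<and> l$1 > 0}"

definition unit_future_timelike :: "real^4 \<Rightarrow> bool" where
  "unit_future_timelike t \<longleftrightarrow> mdot t t = 1 \<and> t$1 > 0"

text \<open>Lowered component l_a = eta_ab l^b.\<close>
definition lower :: "real^4 \<Rightarrow> 4 \<Rightarrow> real" where
  "lower l a = (if a = 1 then l$a else - (l$a))"

definition sph :: "real \<Rightarrow> real \<Rightarrow> real^4" where
  "sph \<theta> \<phi> = vector [1, sin \<theta> * cos \<phi>, sin \<theta> * sin \<phi>, cos \<theta>]"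

text \<open>\<open>\<integral> g d^2l\<close>: integral over the unit sphere {t.l = 1}, t = (1,0,0,0),
  with the rotation-invariant area measure sin\<theta> d\<theta> d\<phi>.\<close>
definition null_int :: "(real^4 \<Rightarrow> complex) \<Rightarrow> complex" where
  "null_int g = integral {0..pi} (\<lambda>\<theta>. integral {0..2*pi}
      (\<lambda>\<phi>. complex_of_real (sin \<theta>) * g (sph \<theta> \<phi>)))"

end

theory Submission
  imports Defs
begin

(* Differentiating
   the vanishing condition int Sigma(x.l, l) d^2l = 0 along a vector v brings down a factor v.l;
   as Sigma is only continuous in s, derivatives are replaced by finite differences of sliding
   integrals. Hence for every product P of k linear forms the moment
   f(s) = int P(l) Sigma(s, l) d^2l has vanishing k-th differences (take x = s e_0 with
   e_0 = (1, 0, 0, 0), so that x.l = s on the slice), hence f is a polynomial, of degree at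
   most m by the growth bound, with m independent of P. Products of linear forms span the
   polynomials, which are dense on the sphere (Stone-Weierstrass), so Sigma(s, l) is its own
   Lagrange interpolant of degree m in s; homogeneity extends this to the whole cone. Writing
   Sigma = sum s^k Sigma_k, differentiating the condition k times and setting x = 0 finally
   gives int l_a1 ... l_ak Sigma_k d^2l = 0. *)

section \<open>Finite differences and polynomials in one variable\<close>

definition fdiff :: "real \<Rightarrow> (real \<Rightarrow> 'a::ab_group_add) \<Rightarrow> real \<Rightarrow> 'a" where
  "fdiff h f s = f (s + h) - f s"

definition sliding_integral :: "real \<Rightarrow> (real \<Rightarrow> 'a::banach) \<Rightarrow> real \<Rightarrow> 'a" where
  "sliding_integral h f s = integral {s..s + h} f"

definition sliding_mean :: "real \<Rightarrow> (real \<Rightarrow> real) \<Rightarrow> real \<Rightarrow> real" where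
  "sliding_mean h f s = sliding_integral h f s / h"

lemma fdiff_eq: "fdiff h f = (\<lambda>s. f (s + h) - f s)"
  by (simp add: fdiff_def fun_eq_iff)

lemma fdiff_funpow_Suc: "(fdiff h ^^ Suc n) f s = (fdiff h ^^ n) f (s + h) - (fdiff h ^^ n) f s"
  by (simp only: funpow.simps o_apply fdiff_def)

lemma fdiff_funpow_compose:
  assumes "\<And>x y. g (x - y) = g x - g y"
  shows "(fdiff h ^^ n) (\<lambda>s. g (f s)) = (\<lambda>s. g ((fdiff h ^^ n) f s))"
  by (induction n) (auto simp: fdiff_def assms)

lemma has_vector_derivative_fdiff:
  assumes "\<And>s. (f has_vector_derivative f' s) (at s)"
  shows "(fdiff h f has_vector_derivative fdiff h f' s) (at s)"
proof -
  have "((\<lambda>t. t + h) has_vector_derivative 1) (at s)"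
    by (auto intro!: derivative_eq_intros)
  from vector_diff_chain_at[OF this assms]
  have "((\<lambda>t. f (t + h)) has_vector_derivative f' (s + h)) (at s)"
    by (simp add: o_def)
  then show ?thesis
    unfolding fdiff_eq by (intro has_vector_derivative_diff assms)
qed

lemma has_vector_derivative_fdiff_funpow:
  assumes "\<And>s. (f has_vector_derivative f' s) (at s)"
  shows "((fdiff h ^^ n) f has_vector_derivative (fdiff h ^^ n) f' s) (at s)"
proof (induction n arbitrary: s)
  case 0
  then show ?case using assms by simp
next
  case (Suc n)
  then show ?case by (simp only: funpow.simps o_apply) (rule has_vector_derivative_fdiff)
qed

lemma has_vector_derivative_sliding_integral:
  fixes f :: "real \<Rightarrow> 'a::banach"
  assumes f: "continuous_on UNIV f" and h: "h \<ge> 0"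
  shows "(sliding_integral h f has_vector_derivative fdiff h f s) (at s)"
proof -
  define a where "a = s - 1"
  define F where "F u = integral {a..u} f" for u
  have F': "(F has_vector_derivative f u) (at u)" if "a < u" for u
  proof -
    have "(F has_vector_derivative f u) (at u within {a..u + 1})"
      unfolding F_def using that by (intro integral_has_vector_derivative continuous_on_subset[OF f]) auto
    then have "(F has_vector_derivative f u) (at u within {a<..<u + 1})"
      by (rule has_vector_derivative_within_subset) auto
    then show ?thesis using that by (subst (asm) has_vector_derivative_within_open) auto
  qed
  have "((\<lambda>t. t + h) has_vector_derivative 1) (at s)"
    by (auto intro!: derivative_eq_intros)
  from vector_diff_chain_at[OF this F'[of "s + h"]]
  have "((\<lambda>t. F (t + h)) has_vector_derivative f (s + h)) (at s)"
    using h by (simp add: o_def a_def)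
  then have "((\<lambda>t. F (t + h) - F t) has_vector_derivative fdiff h f s) (at s)"
    unfolding fdiff_def by (intro has_vector_derivative_diff F') (simp_all add: a_def)
  then show ?thesis
  proof (rule has_vector_derivative_transform_within_open)
    fix t assume t: "t \<in> {a<..}"
    have "f integrable_on {a..t + h}"
      by (rule integrable_continuous_real, rule continuous_on_subset[OF f]) auto
    then have "integral {a..t} f + integral {t..t + h} f = integral {a..t + h} f"
      using t h by (intro Henstock_Kurzweil_Integration.integral_combine) auto
    then show "F (t + h) - F t = sliding_integral h f t"
      by (simp add: F_def sliding_integral_def algebra_simps)
  qed (auto simp: a_def)
qed

lemma has_real_derivative_sliding_mean:
  assumes "continuous_on UNIV f" "h > 0"
  shows "(sliding_mean h f has_real_derivative fdiff h f s / h) (at s)"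
proof -
  have "(sliding_integral h f has_real_derivative fdiff h f s) (at s)"
    using has_vector_derivative_sliding_integral[of f h s] assms
    by (simp add: has_real_derivative_iff_has_vector_derivative)
  from DERIV_cdivide[OF this, of h] show ?thesis
    by (simp add: sliding_mean_def[abs_def])
qed

lemma continuous_on_sliding_mean_funpow:
  assumes "continuous_on UNIV f" "h > 0"
  shows "continuous_on UNIV ((sliding_mean h ^^ n) f)"
  by (induction n) (use assms in \<open>auto intro: DERIV_continuous_on has_real_derivative_sliding_mean\<close>)

text \<open>The derivative of a sliding mean is a difference quotient, so if \<open>\<Delta>\<^sub>h\<^sup>n f = 0\<close> the \<open>n\<close>-fold
  mean of \<open>f\<close> has vanishing \<open>n\<close>-th derivative, and Taylor's formula makes it a polynomial.\<close>

lemma sliding_mean_funpow_eq_poly: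
  assumes f: "continuous_on UNIV f" and h: "h > 0"
    and vanish: "\<And>s. (fdiff h ^^ n) f s = 0"
  shows "\<exists>p. degree p \<le> n \<and> (sliding_mean h ^^ n) f = poly p"
proof -
  define D where "D m = (if m \<le> n then (\<lambda>s. (fdiff h ^^ m) ((sliding_mean h ^^ (n - m)) f) s / h ^ m)
    else (\<lambda>s. 0))" for m
  have Dn: "D n = (\<lambda>s. 0)"
    by (simp add: D_def vanish)
  have "(D m has_real_derivative D (Suc m) s) (at s)" for m s
  proof (cases "m < n")
    case True
    define g where "g = (sliding_mean h ^^ (n - Suc m)) f"
    have g: "continuous_on UNIV g"
      unfolding g_def by (rule continuous_on_sliding_mean_funpow[OF f h])
    have mean_g: "(sliding_mean h ^^ (n - m)) f = sliding_mean h g"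
      using True by (simp add: g_def Suc_diff_Suc[symmetric])
    have "((fdiff h ^^ m) (sliding_mean h g) has_vector_derivative
        (fdiff h ^^ m) (\<lambda>s. fdiff h g s / h) s) (at s)"
      using has_real_derivative_sliding_mean[OF g h]
      by (intro has_vector_derivative_fdiff_funpow) (simp add: has_real_derivative_iff_has_vector_derivative)
    moreover have "(fdiff h ^^ m) (\<lambda>s. fdiff h g s / h) = (\<lambda>s. (fdiff h ^^ Suc m) g s / h)"
      using fdiff_funpow_compose[where g = "\<lambda>x. x / h" and h = h and n = m and f = "fdiff h g"]
      by (simp add: diff_divide_distrib funpow_Suc_right del: funpow.simps)
    ultimately have "((fdiff h ^^ m) (sliding_mean h g) has_real_derivative
        (fdiff h ^^ Suc m) g s / h) (at s)"
      by (simp add: has_real_derivative_iff_has_vector_derivative)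
    from DERIV_cdivide[OF this, of "h ^ m"] show ?thesis
      using True h by (simp add: D_def mean_g g_def field_simps)
  next
    case False
    then show ?thesis
      using Dn by (cases "m = n") (auto simp: D_def)
  qed
  moreover have "D 0 = (sliding_mean h ^^ n) f"
    by (simp add: D_def)
  ultimately have Taylor: "(sliding_mean h ^^ n) f s = (\<Sum>m<n. D m 0 / fact m * s ^ m)" for s
    using Maclaurin_all_le[of D "(sliding_mean h ^^ n) f" s n] Dn by auto
  define p where "p = (\<Sum>m<n. monom (D m 0 / fact m) m)"
  have "degree p \<le> n"
    unfolding p_def by (intro degree_sum_le order.trans[OF degree_monom_le]) auto
  moreover have "(sliding_mean h ^^ n) f = poly p"
    by (simp add: fun_eq_iff Taylor p_def poly_sum poly_monom)
  ultimately show ?thesis by blast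
qed

lemma sliding_mean_funpow_close:
  assumes f: "continuous_on UNIV f" and h: "h > 0"
    and close: "\<And>\<sigma>. \<sigma> \<in> {u..u + real n * h} \<Longrightarrow> \<bar>f \<sigma> - c\<bar> \<le> e"
  shows "\<bar>(sliding_mean h ^^ n) f u - c\<bar> \<le> e"
  using close
proof (induction n arbitrary: u)
  case 0
  then show ?case by simp
next
  case (Suc n)
  define g where "g = (sliding_mean h ^^ n) f"
  have g: "continuous_on UNIV g"
    unfolding g_def by (rule continuous_on_sliding_mean_funpow[OF f h])
  have "norm (integral {u..u + h} (\<lambda>\<sigma>. g \<sigma> - c)) \<le> e * (u + h - u)"
  proof (rule integral_bound)
    show "continuous_on {u..u + h} (\<lambda>\<sigma>. g \<sigma> - c)"
      by (intro continuous_intros continuous_on_subset[OF g]) auto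
    fix \<sigma> assume \<sigma>: "\<sigma> \<in> {u..u + h}"
    have "\<bar>g \<sigma> - c\<bar> \<le> e"
      unfolding g_def
    proof (rule Suc.IH)
      fix \<tau> assume "\<tau> \<in> {\<sigma>..\<sigma> + real n * h}"
      then show "\<bar>f \<tau> - c\<bar> \<le> e"
        using \<sigma> by (intro Suc.prems) (auto simp: algebra_simps)
    qed
    then show "norm (g \<sigma> - c) \<le> e"
      by simp
  qed (use h in auto)
  moreover have "integral {u..u + h} (\<lambda>\<sigma>. g \<sigma> - c) = integral {u..u + h} g - h * c"
    using h by (subst integral_diff) (auto intro: integrable_continuous_real continuous_on_subset[OF g])
  ultimately have bound: "\<bar>integral {u..u + h} g - h * c\<bar> \<le> e * h"
    by simp
  have "(sliding_mean h ^^ Suc n) f u - c = (integral {u..u + h} g - h * c) / h"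
    using h by (simp add: g_def sliding_mean_def sliding_integral_def field_simps)
  then show ?case
    using h bound by (simp add: abs_divide pos_divide_le_eq)
qed

lemma tendsto_sliding_mean_funpow:
  assumes f: "continuous_on UNIV f"
  shows "((\<lambda>h. (sliding_mean h ^^ n) f s) \<longlongrightarrow> f s) (at_right 0)"
proof (rule tendstoI)
  fix e :: real assume "e > 0"
  then obtain d where d: "d > 0" "\<And>\<sigma>. dist \<sigma> s < d \<Longrightarrow> dist (f \<sigma>) (f s) < e / 2"
    using f unfolding continuous_on_eq_continuous_at[OF open_UNIV] continuous_at_eps_delta
    by (metis UNIV_I half_gt_zero)
  have "\<bar>(sliding_mean h ^^ n) f s - f s\<bar> \<le> e / 2" if "0 < h" "h < d / (n + 1)" for h
  proof (rule sliding_mean_funpow_close[OF f \<open>0 < h\<close>])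
    fix \<sigma> assume \<sigma>: "\<sigma> \<in> {s..s + real n * h}"
    have "real n * h < d"
      using that d(1) by (simp add: field_simps)
    then show "\<bar>f \<sigma> - f s\<bar> \<le> e / 2"
      using d(2)[of \<sigma>] \<sigma> by (simp add: dist_real_def)
  qed
  then show "\<forall>\<^sub>F h in at_right 0. dist ((sliding_mean h ^^ n) f s) (f s) < e"
    unfolding eventually_at_right_field dist_real_def using \<open>e > 0\<close> d(1)
    by (intro exI[of _ "d / (n + 1)"]) fastforce
qed

definition lagrange_basis :: "nat \<Rightarrow> nat \<Rightarrow> real poly" where
  "lagrange_basis n i = smult (1 / (\<Prod>j\<in>{..<n} - {i}. real i - real j)) (\<Prod>j\<in>{..<n} - {i}. [:- real j, 1:])"

definition lagrange_poly :: "nat \<Rightarrow> (nat \<Rightarrow> real) \<Rightarrow> real poly" where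
  "lagrange_poly n c = (\<Sum>i<n. smult (c i) (lagrange_basis n i))"

lemma poly_lagrange_basis:
  assumes "k < n"
  shows "poly (lagrange_basis n i) (real k) = of_bool (k = i)"
proof -
  have "(\<Prod>j\<in>{..<n} - {i}. real i - real j) \<noteq> 0"
    by auto
  moreover have "(\<Prod>j\<in>{..<n} - {i}. real k - real j) = 0" if "k \<noteq> i"
    using that assms by (subst prod_zero_iff) auto
  ultimately show ?thesis
    by (auto simp: lagrange_basis_def poly_prod)
qed

lemma degree_lagrange_basis:
  assumes "i < n"
  shows "degree (lagrange_basis n i) < n"
proof -
  have "degree (lagrange_basis n i) \<le> (\<Sum>j\<in>{..<n} - {i}. degree [:- real j, 1:])"
    unfolding lagrange_basis_def
    using degree_prod_sum_le[of "{..<n} - {i}" "\<lambda>j. [:- real j, 1:]"]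
    by (simp add: o_def)
  also have "\<dots> = n - 1"
    using assms by (simp add: card_Diff_singleton)
  finally show ?thesis
    using assms by linarith
qed

lemma poly_lagrange_poly: "poly (lagrange_poly n c) s = (\<Sum>i<n. c i * poly (lagrange_basis n i) s)"
  by (simp add: lagrange_poly_def poly_sum)

lemma degree_lagrange_poly:
  assumes "n > 0"
  shows "degree (lagrange_poly n c) < n"
proof -
  have "degree (lagrange_poly n c) \<le> n - 1"
    unfolding lagrange_poly_def
    by (intro degree_sum_le order.trans[OF degree_smult_le]) (use degree_lagrange_basis in fastforce)+
  then show ?thesis
    using assms by linarith
qed

lemma lagrange_interpolation:
  assumes "degree p < n"
  shows "lagrange_poly n (\<lambda>i. poly p (real i)) = p"
proof (rule poly_eqI_degree[where A = "real ` {..<n}"])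
  fix x assume "x \<in> real ` {..<n}"
  then obtain k where "k < n" "x = real k"
    by auto
  moreover have "{..<n} \<inter> {i. k = i} = {k}"
    using \<open>k < n\<close> by auto
  ultimately show "poly (lagrange_poly n (\<lambda>i. poly p (real i))) x = poly p x"
    by (simp add: poly_lagrange_poly poly_lagrange_basis)
next
  have "card (real ` {..<n}) = n"
    by (simp add: card_image)
  then show "degree (lagrange_poly n (\<lambda>i. poly p (real i))) < card (real ` {..<n})"
    and "degree p < card (real ` {..<n})"
    using assms degree_lagrange_poly[of n] by auto
qed

text \<open>As \<open>h \<rightarrow> 0\<close> the \<open>n\<close>-fold sliding means tend to \<open>f\<close>; they are polynomials of degree at most
  \<open>n\<close>, hence determined by their values at \<open>0, \<dots>, n\<close>, and so is their limit.\<close>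

lemma fdiff_vanishing_imp_poly:
  assumes f: "continuous_on UNIV f"
    and vanish: "\<And>h s. h > 0 \<Longrightarrow> (fdiff h ^^ n) f s = 0"
  shows "f = poly (lagrange_poly (Suc n) (\<lambda>i. f (real i)))"
proof
  fix s
  let ?L = "\<lambda>g. poly (lagrange_poly (Suc n) (\<lambda>i. g (real i))) s"
  have "\<forall>\<^sub>F h in at_right 0. ?L ((sliding_mean h ^^ n) f) = (sliding_mean h ^^ n) f s"
  proof (rule eventually_at_right_less[THEN eventually_mono])
    fix h :: real assume "h > 0"
    then obtain p where "degree p \<le> n" "(sliding_mean h ^^ n) f = poly p"
      using sliding_mean_funpow_eq_poly[OF f _ vanish] by blast
    then show "?L ((sliding_mean h ^^ n) f) = (sliding_mean h ^^ n) f s"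
      by (simp add: lagrange_interpolation)
  qed
  moreover have "((\<lambda>h. ?L ((sliding_mean h ^^ n) f)) \<longlongrightarrow> ?L f) (at_right 0)"
    unfolding poly_lagrange_poly by (intro tendsto_intros tendsto_sliding_mean_funpow f)
  ultimately have "((\<lambda>h. (sliding_mean h ^^ n) f s) \<longlongrightarrow> ?L f) (at_right 0)"
    by (rule Lim_transform_eventually[rotated])
  from tendsto_unique[OF _ tendsto_sliding_mean_funpow[OF f] this] show "f s = ?L f"
    by simp
qed

lemma poly_bounded_imp_degree_le:
  fixes p :: "real poly"
  assumes bound: "\<And>x. \<bar>poly p x\<bar> \<le> K * (1 + \<bar>x\<bar>) ^ m"
  shows "degree p \<le> m"
proof (rule ccontr)
  assume "\<not> degree p \<le> m"
  then have deg: "degree ([:1, 1:] ^ m) < degree p" and "p \<noteq> 0"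
    by (auto simp: degree_linear_power)
  have "K \<ge> 0"
    using order_trans[OF abs_ge_zero bound[of 0]] by simp
  have "((\<lambda>x. poly ([:1, 1:] ^ m) x / poly p x) \<longlongrightarrow> 0) at_top"
    using poly_divide_tendsto_0_at_infinity[OF deg] at_top_le_at_infinity by (rule tendsto_mono[rotated])
  then have "\<forall>\<^sub>F x in at_top. \<bar>poly ([:1, 1:] ^ m) x / poly p x\<bar> < 1 / (K + 1)"
    using \<open>K \<ge> 0\<close> by (simp add: tendsto_iff dist_real_def)
  moreover have "\<forall>\<^sub>F x in at_top. poly p x \<noteq> 0"
    by (rule filter_leD[OF at_top_le_at_infinity poly_eventually_not_zero[OF \<open>p \<noteq> 0\<close>]])
  moreover have "\<forall>\<^sub>F x in at_top. x \<ge> (0::real)"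
    by (rule eventually_ge_at_top)
  ultimately have "\<forall>\<^sub>F x in at_top. x \<ge> 0 \<and> poly p x \<noteq> 0 \<and>
      \<bar>poly ([:1, 1:] ^ m) x / poly p x\<bar> < 1 / (K + 1)"
    by eventually_elim blast
  then obtain x where x: "x \<ge> 0" "poly p x \<noteq> 0"
    and "\<bar>poly ([:1, 1:] ^ m) x / poly p x\<bar> < 1 / (K + 1)"
    unfolding eventually_at_top_linorder by blast
  then have small: "(1 + x) ^ m < \<bar>poly p x\<bar> / (K + 1)"
    using \<open>K \<ge> 0\<close> by (simp add: poly_power abs_divide divide_less_eq)
  have "(1 + x) ^ m > 0" "\<bar>poly p x\<bar> \<le> K * (1 + x) ^ m"
    using x bound[of x] by simp_all
  then have "\<bar>poly p x\<bar> < (K + 1) * (1 + x) ^ m"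
    unfolding distrib_right by linarith
  with small \<open>K \<ge> 0\<close> show False
    by (simp add: field_simps)
qed

lemma fdiff_vanishing_bounded_imp_lagrange:
  assumes f: "continuous_on UNIV f"
    and vanish: "\<And>h s. h > 0 \<Longrightarrow> (fdiff h ^^ n) f s = 0"
    and bound: "\<And>s. \<bar>f s\<bar> \<le> K * (1 + \<bar>s\<bar>) ^ m"
  shows "f = poly (lagrange_poly (Suc m) (\<lambda>i. f (real i)))"
proof -
  define p where "p = lagrange_poly (Suc n) (\<lambda>i. f (real i))"
  have f_eq: "f = poly p"
    unfolding p_def by (rule fdiff_vanishing_imp_poly[OF f vanish])
  then have "degree p < Suc m"
    using bound poly_bounded_imp_degree_le[of p K m] by auto
  from lagrange_interpolation[OF this] show ?thesis
    by (simp flip: f_eq)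
qed

lemma complex_fdiff_vanishing_bounded_imp_lagrange:
  fixes f :: "real \<Rightarrow> complex"
  assumes f: "continuous_on UNIV f"
    and vanish: "\<And>h s. h > 0 \<Longrightarrow> (fdiff h ^^ n) f s = 0"
    and bound: "\<And>s. norm (f s) \<le> K * (1 + \<bar>s\<bar>) ^ m"
  shows "f s = (\<Sum>i<Suc m. f (real i) * of_real (poly (lagrange_basis (Suc m) i) s))"
proof -
  have "(\<lambda>s. Re (f s)) = poly (lagrange_poly (Suc m) (\<lambda>i. Re (f (real i))))"
  proof (rule fdiff_vanishing_bounded_imp_lagrange)
    show "continuous_on UNIV (\<lambda>s. Re (f s))"
      by (intro continuous_intros f)
    show "(fdiff h ^^ n) (\<lambda>s. Re (f s)) s = 0" if "h > 0" for h s
      using vanish[OF that] by (simp add: fdiff_funpow_compose[where g = Re])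
    show "\<bar>Re (f s)\<bar> \<le> K * (1 + \<bar>s\<bar>) ^ m" for s
      using order_trans[OF abs_Re_le_cmod bound] .
  qed
  then have "Re (f s) = poly (lagrange_poly (Suc m) (\<lambda>i. Re (f (real i)))) s"
    by (rule fun_cong)
  moreover have "(\<lambda>s. Im (f s)) = poly (lagrange_poly (Suc m) (\<lambda>i. Im (f (real i))))"
  proof (rule fdiff_vanishing_bounded_imp_lagrange)
    show "continuous_on UNIV (\<lambda>s. Im (f s))"
      by (intro continuous_intros f)
    show "(fdiff h ^^ n) (\<lambda>s. Im (f s)) s = 0" if "h > 0" for h s
      using vanish[OF that] by (simp add: fdiff_funpow_compose[where g = Im])
    show "\<bar>Im (f s)\<bar> \<le> K * (1 + \<bar>s\<bar>) ^ m" for s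
      using order_trans[OF abs_Im_le_cmod bound] .
  qed
  then have "Im (f s) = poly (lagrange_poly (Suc m) (\<lambda>i. Im (f (real i)))) s"
    by (rule fun_cong)
  ultimately show ?thesis
    by (simp add: complex_eq_iff poly_lagrange_poly Re_sum Im_sum)
qed

lemma abs_poly_le_coeff_sum:
  fixes p :: "real poly"
  shows "\<bar>poly p x\<bar> \<le> (\<Sum>i\<le>degree p. \<bar>coeff p i\<bar>) * (1 + \<bar>x\<bar>) ^ degree p"
proof -
  have "\<bar>poly p x\<bar> \<le> (\<Sum>i\<le>degree p. \<bar>coeff p i\<bar> * \<bar>x\<bar> ^ i)"
    unfolding poly_altdef by (rule order_trans[OF sum_abs]) (simp add: abs_mult power_abs)
  also have "\<dots> \<le> (\<Sum>i\<le>degree p. \<bar>coeff p i\<bar> * (1 + \<bar>x\<bar>) ^ degree p)"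
    by (intro sum_mono mult_left_mono order_trans[OF power_mono power_increasing]) auto
  finally show ?thesis
    by (simp add: sum_distrib_right)
qed

lemma poly_eq_sum_degree_le:
  fixes p :: "real poly"
  assumes "degree p \<le> m"
  shows "poly p s = (\<Sum>k\<le>m. coeff p k * s ^ k)"
proof -
  have "poly p s = (\<Sum>k\<le>degree p. coeff p k * s ^ k)"
    by (rule poly_altdef)
  also have "\<dots> = (\<Sum>k\<le>m. coeff p k * s ^ k)"
    using assms by (intro sum.mono_neutral_left) (auto simp: coeff_eq_0)
  finally show ?thesis .
qed

definition interpolant_coeff :: "(real \<Rightarrow> 'a \<Rightarrow> complex) \<Rightarrow> nat \<Rightarrow> nat \<Rightarrow> 'a \<Rightarrow> complex" where
  "interpolant_coeff F m k l = (\<Sum>i<Suc m. F (real i) l * of_real (coeff (lagrange_basis (Suc m) i) k))"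

lemma lagrange_sum_eq_power_sum:
  "(\<Sum>i<Suc m. F (real i) l * of_real (poly (lagrange_basis (Suc m) i) s))
    = (\<Sum>k\<le>m. of_real (s ^ k) * interpolant_coeff F m k l)"
proof -
  have "poly (lagrange_basis (Suc m) i) s = (\<Sum>k\<le>m. coeff (lagrange_basis (Suc m) i) k * s ^ k)"
    if "i < Suc m" for i
    using degree_lagrange_basis[OF that] by (intro poly_eq_sum_degree_le) simp
  then have "(\<Sum>i<Suc m. F (real i) l * of_real (poly (lagrange_basis (Suc m) i) s))
      = (\<Sum>i<Suc m. \<Sum>k\<le>m. of_real (s ^ k) * (F (real i) l * of_real (coeff (lagrange_basis (Suc m) i) k)))"
    by (simp add: sum_distrib_left mult_ac)
  also have "\<dots> = (\<Sum>k\<le>m. of_real (s ^ k) * interpolant_coeff F m k l)"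
    unfolding interpolant_coeff_def by (subst sum.swap) (simp only: sum_distrib_left)
  finally show ?thesis .
qed

section \<open>Spherical coordinates on the null cone\<close>

definition angles :: "(real \<times> real) set" where
  "angles = cbox (0, 0) (pi, 2 * pi)"

definition sph_pt :: "real \<times> real \<Rightarrow> real^4" where
  "sph_pt z = sph (fst z) (snd z)"

definition sph_integral :: "(real \<times> real \<Rightarrow> complex) \<Rightarrow> complex" where
  "sph_integral g = integral angles (\<lambda>z. of_real (sin (fst z)) * g z)"

definition sph_dot :: "real^4 \<Rightarrow> real \<times> real \<Rightarrow> real" where
  "sph_dot x z = mdot x (sph_pt z)"

definition sph_monomial :: "(real^4) list \<Rightarrow> real \<times> real \<Rightarrow> real" where
  "sph_monomial vs z = (\<Prod>v\<leftarrow>vs. sph_dot v z)"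

lemma sph_pt_nth [simp]:
  "sph_pt z $ 1 = 1" "sph_pt z $ 2 = sin (fst z) * cos (snd z)"
  "sph_pt z $ 3 = sin (fst z) * sin (snd z)" "sph_pt z $ 4 = cos (fst z)"
  by (simp_all add: sph_pt_def sph_def vector_def)

lemma sph_dot_eq:
  "sph_dot x z = x $ 1 - x $ 2 * (sin (fst z) * cos (snd z)) - x $ 3 * (sin (fst z) * sin (snd z))
    - x $ 4 * cos (fst z)"
  by (simp add: sph_dot_def mdot_def)

lemma sph_dot_add_scaleR: "sph_dot (x + t *\<^sub>R v) z = sph_dot x z + t * sph_dot v z"
  by (simp add: sph_dot_eq algebra_simps)

lemma sph_dot_axis: "sph_dot (axis b 1) z = lower (sph_pt z) b"
  using exhaust_4[of b] by (auto simp: sph_dot_def mdot_def axis_def lower_def)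

lemma sph_dot_scaleR: "sph_dot (c *\<^sub>R x) z = c * sph_dot x z"
  by (simp add: sph_dot_eq algebra_simps)

lemma sph_dot_axis_1: "sph_dot (axis 1 1) z = 1"
  by (simp add: sph_dot_axis lower_def)

lemma sph_monomial_axes:
  "sph_monomial (map (\<lambda>i. axis (a i) 1) [0..<k]) z = (\<Prod>i<k. lower (sph_pt z) (a i))"
  by (induction k) (simp_all add: sph_monomial_def sph_dot_axis)

lemma continuous_on_sph_pt: "continuous_on S sph_pt"
proof -
  have "continuous_on S (\<lambda>z. \<chi> i. sph_pt z $ i)"
  proof (rule continuous_on_vec_lambda)
    fix i :: 4
    show "continuous_on S (\<lambda>z. sph_pt z $ i)"
      using exhaust_4[of i] by (elim disjE) (auto intro!: continuous_intros)
  qed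
  then show ?thesis
    by simp
qed

lemma continuous_on_sph_dot [continuous_intros]:
  fixes g :: "'a::t2_space \<Rightarrow> real \<times> real"
  assumes "continuous_on S g"
  shows "continuous_on S (\<lambda>p. sph_dot v (g p))"
  unfolding sph_dot_eq by (intro continuous_intros assms)

lemma continuous_on_sph_monomial [continuous_intros]:
  fixes g :: "'a::t2_space \<Rightarrow> real \<times> real"
  assumes "continuous_on S g"
  shows "continuous_on S (\<lambda>p. sph_monomial vs (g p))"
  by (induction vs) (auto simp: sph_monomial_def intro!: continuous_intros assms)

lemma sph_pt_future_null: "sph_pt z \<in> future_null"
proof -
  have "(sin (fst z) * cos (snd z))\<^sup>2 + (sin (fst z) * sin (snd z))\<^sup>2 + (cos (fst z))\<^sup>2
      = (sin (fst z))\<^sup>2 * ((sin (snd z))\<^sup>2 + (cos (snd z))\<^sup>2) + (cos (fst z))\<^sup>2"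
    by algebra
  then have "(sin (fst z) * cos (snd z))\<^sup>2 + (sin (fst z) * sin (snd z))\<^sup>2 + (cos (fst z))\<^sup>2 = 1"
    by simp
  then show ?thesis
    by (simp add: future_null_def mdot_def power2_eq_square algebra_simps)
qed

lemma continuous_on_compose_pair:
  assumes "continuous_on (A \<times> B) (\<lambda>(s, l). F s l)" "continuous_on S a" "continuous_on S b"
    "\<And>p. p \<in> S \<Longrightarrow> a p \<in> A" "\<And>p. p \<in> S \<Longrightarrow> b p \<in> B"
  shows "continuous_on S (\<lambda>p. F (a p) (b p))"
  using continuous_on_compose2[OF assms(1), of S "\<lambda>p. (a p, b p)"] assms
  by (auto intro: continuous_on_Pair)

lemma continuous_on_compose_sph_pt:
  fixes \<Sigma> :: "real \<Rightarrow> real^4 \<Rightarrow> complex"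
  assumes "continuous_on (UNIV \<times> future_null) (\<lambda>(s, l). \<Sigma> s l)" "continuous_on S a"
  shows "continuous_on S (\<lambda>z. \<Sigma> (a z) (sph_pt z))"
  by (rule continuous_on_compose_pair[OF assms continuous_on_sph_pt]) (simp_all add: sph_pt_future_null)

lemma sph_pt_surj:
  assumes "l \<in> future_null" "l $ 1 = 1"
  obtains z where "z \<in> angles" "sph_pt z = l"
proof -
  have unit: "(l $ 2)\<^sup>2 + (l $ 3)\<^sup>2 + (l $ 4)\<^sup>2 = 1"
    using assms unfolding future_null_def mdot_def by (auto simp: power2_eq_square)
  then have "(l $ 4)\<^sup>2 \<le> 1"
    using zero_le_power2[of "l $ 2"] zero_le_power2[of "l $ 3"] by linarith
  then have "\<bar>l $ 4\<bar> \<le> 1"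
    by (simp add: abs_square_le_1)
  define \<theta> where "\<theta> = arccos (l $ 4)"
  have \<theta>: "0 \<le> \<theta>" "\<theta> \<le> pi" "cos \<theta> = l $ 4"
    using \<open>\<bar>l $ 4\<bar> \<le> 1\<close> by (simp_all add: \<theta>_def arccos_lbound arccos_ubound)
  have sin2: "(sin \<theta>)\<^sup>2 = (l $ 2)\<^sup>2 + (l $ 3)\<^sup>2"
    using unit sin_cos_squared_add[of \<theta>] unfolding \<theta>(3) by linarith
  obtain \<phi> where \<phi>: "0 \<le> \<phi>" "\<phi> \<le> 2 * pi" "sin \<theta> * cos \<phi> = l $ 2" "sin \<theta> * sin \<phi> = l $ 3"
  proof (cases "sin \<theta> = 0")
    case True
    then have "l $ 2 = 0" "l $ 3 = 0"
      using sin2 by (simp_all add: sum_power2_eq_zero_iff)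
    then show ?thesis
      using that[of 0] True by simp
  next
    case False
    have "(l $ 2 / sin \<theta>)\<^sup>2 + (l $ 3 / sin \<theta>)\<^sup>2 = ((l $ 2)\<^sup>2 + (l $ 3)\<^sup>2) / (sin \<theta>)\<^sup>2"
      by (simp add: power_divide add_divide_distrib)
    also have "\<dots> = 1"
      using False by (simp flip: sin2)
    finally have "(l $ 2 / sin \<theta>)\<^sup>2 + (l $ 3 / sin \<theta>)\<^sup>2 = 1" .
    from sincos_total_2pi_le[OF this] obtain t
      where "0 \<le> t" "t \<le> 2 * pi" "l $ 2 / sin \<theta> = cos t" "l $ 3 / sin \<theta> = sin t"
      by blast
    then show ?thesis
      using that[of t] False by (simp add: field_simps)
  qed
  have "(\<theta>, \<phi>) \<in> angles"
    using \<theta> \<phi> by (simp add: angles_def cbox_Pair_eq)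
  moreover have "sph_pt (\<theta>, \<phi>) = l"
    using \<theta> \<phi> assms(2) by (simp add: vec_eq_iff forall_4)
  ultimately show ?thesis
    using that by blast
qed

lemma null_int_eq_sph_integral:
  assumes "continuous_on angles (\<lambda>z. g (sph_pt z))"
  shows "null_int g = sph_integral (\<lambda>z. g (sph_pt z))"
proof -
  have "continuous_on (cbox (0, 0) (pi, 2 * pi)) (\<lambda>z. of_real (sin (fst z)) * g (sph_pt z))"
    using assms unfolding angles_def by (intro continuous_intros)
  from integral_prod_continuous[OF this] show ?thesis
    by (simp add: null_int_def sph_integral_def angles_def cbox_interval sph_pt_def)
qed

lemma compact_angles: "compact angles"
  by (simp add: angles_def)

lemma zero_mem_angles: "(0, 0) \<in> angles"
  by (simp add: angles_def cbox_Pair_eq)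

lemma continuous_on_angles_bounded:
  assumes "continuous_on angles u"
  obtains M where "M \<ge> 0" "\<And>z. z \<in> angles \<Longrightarrow> norm (u z) \<le> M"
proof -
  obtain M where M: "\<And>z. z \<in> angles \<Longrightarrow> norm (u z) \<le> M"
    using compact_imp_bounded[OF compact_continuous_image[OF assms compact_angles]]
    unfolding bounded_iff by auto
  moreover have "M \<ge> 0"
    using order_trans[OF norm_ge_zero M[OF zero_mem_angles]] .
  ultimately show ?thesis
    using that by blast
qed

lemma integrable_sph:
  fixes g :: "real \<times> real \<Rightarrow> complex"
  assumes "continuous_on angles g"
  shows "(\<lambda>z. of_real (sin (fst z)) * g z) integrable_on angles"
  unfolding angles_def by (intro integrable_continuous continuous_intros assms[unfolded angles_def])

lemma sph_integral_add:
  "continuous_on angles f \<Longrightarrow> continuous_on angles g \<Longrightarrow>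
    sph_integral (\<lambda>z. f z + g z) = sph_integral f + sph_integral g"
  unfolding sph_integral_def distrib_left by (intro integral_add integrable_sph)

lemma sph_integral_diff:
  "continuous_on angles f \<Longrightarrow> continuous_on angles g \<Longrightarrow>
    sph_integral (\<lambda>z. f z - g z) = sph_integral f - sph_integral g"
  unfolding sph_integral_def right_diff_distrib by (intro integral_diff integrable_sph)

lemma sph_integral_cmult: "sph_integral (\<lambda>z. c * g z) = c * sph_integral g"
  unfolding sph_integral_def by (simp add: mult.left_commute flip: integral_mult_right)

lemma sph_integral_sum:
  "finite I \<Longrightarrow> (\<And>i. i \<in> I \<Longrightarrow> continuous_on angles (g i)) \<Longrightarrow>
    sph_integral (\<lambda>z. \<Sum>i\<in>I. g i z) = (\<Sum>i\<in>I. sph_integral (g i))"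
  unfolding sph_integral_def sum_distrib_left by (intro integral_sum integrable_sph)

lemma norm_sph_integral_le:
  assumes "continuous_on angles g" "\<And>z. z \<in> angles \<Longrightarrow> norm (g z) \<le> B"
  shows "norm (sph_integral g) \<le> B * Henstock_Kurzweil_Integration.content angles"
proof -
  have B: "0 \<le> B"
    using order_trans[OF norm_ge_zero assms(2)[OF zero_mem_angles]] .
  have bound: "norm (of_real (sin (fst z)) * g z) \<le> B" if "z \<in> cbox (0, 0) (pi, 2 * pi)" for z
  proof -
    have "norm (of_real (sin (fst z)) * g z) = \<bar>sin (fst z)\<bar> * norm (g z)"
      by (simp add: norm_mult)
    also have "\<dots> \<le> 1 * B"
      using assms(2)[of z] that B by (intro mult_mono abs_sin_le_one) (auto simp: angles_def)
    finally show ?thesis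
      by simp
  qed
  have "((\<lambda>z. of_real (sin (fst z)) * g z) has_integral sph_integral g) (cbox (0, 0) (pi, 2 * pi))"
    using integrable_integral[OF integrable_sph[OF assms(1)]] unfolding sph_integral_def angles_def .
  from has_integral_bound[OF B this bound] show ?thesis
    by (simp add: angles_def)
qed

lemma continuous_on_sph_integral:
  fixes G :: "real \<Rightarrow> real \<times> real \<Rightarrow> complex"
  assumes "continuous_on (UNIV \<times> angles) (\<lambda>(s, z). G s z)"
  shows "continuous_on UNIV (\<lambda>s. sph_integral (G s))"
proof -
  have "continuous_on (UNIV \<times> cbox (0, 0) (pi, 2 * pi)) (\<lambda>(s, z). of_real (sin (fst z)) * G s z)"
    using assms unfolding angles_def case_prod_beta by (intro continuous_intros)
  from integral_continuous_on_param[OF this] show ?thesis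
    by (simp add: sph_integral_def angles_def)
qed

section \<open>Differentiating the vanishing condition\<close>

definition jointly_continuous :: "(real \<Rightarrow> real \<times> real \<Rightarrow> complex) \<Rightarrow> bool" where
  "jointly_continuous F \<longleftrightarrow> continuous_on (UNIV \<times> angles) (\<lambda>(s, z). F s z)"

definition vanishes_with_weight :: "(real \<times> real \<Rightarrow> complex) \<Rightarrow> (real \<Rightarrow> real \<times> real \<Rightarrow> complex) \<Rightarrow> bool" where
  "vanishes_with_weight Q F \<longleftrightarrow> (\<forall>x. sph_integral (\<lambda>z. Q z * F (sph_dot x z) z) = 0)"

lemma jointly_continuous_compose:
  assumes "jointly_continuous F" "continuous_on S g" "continuous_on S k" "\<And>p. p \<in> S \<Longrightarrow> k p \<in> angles"
  shows "continuous_on S (\<lambda>p. F (g p) (k p))"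
  by (rule continuous_on_compose_pair[OF assms(1)[unfolded jointly_continuous_def] assms(2,3)])
    (use assms(4) in auto)

lemma jointly_continuous_slice: "jointly_continuous F \<Longrightarrow> continuous_on angles (F s)"
  by (rule jointly_continuous_compose[where g = "\<lambda>_. s" and k = "\<lambda>z. z", simplified]) auto

lemma jointly_continuous_slice_in_s:
  "jointly_continuous F \<Longrightarrow> z \<in> angles \<Longrightarrow> continuous_on UNIV (\<lambda>s. F s z)"
  by (rule jointly_continuous_compose[where g = "\<lambda>s. s" and k = "\<lambda>_. z"]) (auto intro: continuous_intros)

lemma jointly_continuous_product:
  "continuous_on angles Q \<Longrightarrow> jointly_continuous F \<Longrightarrow> jointly_continuous (\<lambda>s z. Q z * F s z)"
  unfolding jointly_continuous_def case_prod_beta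
  by (intro continuous_intros continuous_on_compose2[of angles Q _ snd]) auto

lemma has_vector_derivative_sph_integral:
  assumes deriv: "\<And>t z. z \<in> angles \<Longrightarrow> ((\<lambda>t. G t z) has_vector_derivative G' t z) (at t)"
    and G: "jointly_continuous G" and G': "jointly_continuous G'"
  shows "((\<lambda>t. sph_integral (G t)) has_vector_derivative sph_integral (G' t)) (at t)"
proof -
  have "((\<lambda>t. integral (cbox (0, 0) (pi, 2 * pi)) (\<lambda>z. of_real (sin (fst z)) * G t z))
      has_vector_derivative integral (cbox (0, 0) (pi, 2 * pi)) (\<lambda>z. of_real (sin (fst z)) * G' t z))
      (at t within UNIV)"
  proof (rule leibniz_rule_vector_derivative)
    show "((\<lambda>t. of_real (sin (fst z)) * G t z) has_vector_derivative of_real (sin (fst z)) * G' t z)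
        (at t within UNIV)" if "z \<in> cbox (0, 0) (pi, 2 * pi)" for t z
      using deriv[of z t] that by (auto intro: has_vector_derivative_mult_right simp: angles_def)
    show "(\<lambda>z. of_real (sin (fst z)) * G t z) integrable_on cbox (0, 0) (pi, 2 * pi)" for t
      using integrable_sph[OF jointly_continuous_slice[OF G]] by (simp add: angles_def)
    show "continuous_on (UNIV \<times> cbox (0, 0) (pi, 2 * pi)) (\<lambda>(t, z). of_real (sin (fst z)) * G' t z)"
      using G' unfolding jointly_continuous_def angles_def case_prod_beta by (intro continuous_intros)
  qed auto
  then show ?thesis
    by (simp add: sph_integral_def angles_def)
qed

text \<open>Differentiating the vanishing integrals at \<open>x + t v\<close> with respect to \<open>t\<close> brings down
  a factor \<open>v \<cdot> l\<close>.\<close>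

lemma vanishes_with_weight_derivative:
  assumes F: "jointly_continuous F" and F': "jointly_continuous F'"
    and deriv: "\<And>s z. z \<in> angles \<Longrightarrow> ((\<lambda>s. F s z) has_vector_derivative F' s z) (at s)"
    and Q: "continuous_on angles Q"
    and vanish: "vanishes_with_weight Q F"
  shows "vanishes_with_weight (\<lambda>z. Q z * of_real (sph_dot v z)) F'"
  unfolding vanishes_with_weight_def
proof
  fix x
  define G where "G t z = Q z * F (sph_dot x z + t * sph_dot v z) z" for t z
  define G' where "G' t z = Q z * (of_real (sph_dot v z) * F' (sph_dot x z + t * sph_dot v z) z)" for t z
  have shift: "continuous_on (UNIV \<times> angles) (\<lambda>p. sph_dot x (snd p) + fst p * sph_dot v (snd p))"
    by (intro continuous_intros)
  have "jointly_continuous G" "jointly_continuous G'"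
    unfolding G_def G'_def jointly_continuous_def case_prod_beta
    by (intro continuous_intros continuous_on_compose2[OF Q continuous_on_snd]
        jointly_continuous_compose[OF F shift continuous_on_snd]
        jointly_continuous_compose[OF F' shift continuous_on_snd]; force)+
  moreover have "((\<lambda>t. G t z) has_vector_derivative G' t z) (at t)" if "z \<in> angles" for t z
  proof -
    have "((\<lambda>t. sph_dot x z + t * sph_dot v z) has_vector_derivative sph_dot v z) (at t)"
      by (auto intro!: derivative_eq_intros simp: has_real_derivative_iff_has_vector_derivative[symmetric])
    from vector_diff_chain_at[OF this deriv[OF that]]
    show ?thesis
      unfolding G_def G'_def o_def by (intro has_vector_derivative_mult_right) (simp add: scaleR_conv_of_real)
  qed
  ultimately have "((\<lambda>t. sph_integral (G t)) has_vector_derivative sph_integral (G' 0)) (at 0)"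
    by (intro has_vector_derivative_sph_integral)
  moreover have "sph_integral (G t) = 0" for t
    using vanish[unfolded vanishes_with_weight_def, rule_format, of "x + t *\<^sub>R v"]
    by (simp add: G_def[abs_def] sph_dot_add_scaleR)
  ultimately have "((\<lambda>t. 0) has_vector_derivative sph_integral (G' 0)) (at 0)"
    by simp
  then have "sph_integral (G' 0) = 0"
    by (rule vector_derivative_unique_at[OF has_vector_derivative_const, symmetric])
  then show "sph_integral (\<lambda>z. Q z * of_real (sph_dot v z) * F' (sph_dot x z) z) = 0"
    by (simp add: G'_def[abs_def] mult.assoc)
qed

lemma vanishes_with_weight_derivative_chain:
  assumes cont: "\<And>j. j \<le> n \<Longrightarrow> jointly_continuous (F j)"
    and deriv: "\<And>j s z. j < n \<Longrightarrow> z \<in> angles \<Longrightarrow> ((\<lambda>s. F j s z) has_vector_derivative F (Suc j) s z) (at s)"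
    and vanish: "vanishes_with_weight (\<lambda>_. 1) (F 0)"
    and "length vs \<le> n"
  shows "vanishes_with_weight (\<lambda>z. of_real (sph_monomial vs z)) (F (length vs))"
  using \<open>length vs \<le> n\<close>
proof (induction vs)
  case Nil
  then show ?case
    using vanish by (simp add: sph_monomial_def)
next
  case (Cons v vs)
  have "vanishes_with_weight (\<lambda>z. of_real (sph_monomial vs z) * of_real (sph_dot v z)) (F (Suc (length vs)))"
  proof (rule vanishes_with_weight_derivative)
    show "jointly_continuous (F (length vs))" "jointly_continuous (F (Suc (length vs)))"
      using Cons.prems by (auto intro: cont)
    show "((\<lambda>s. F (length vs) s z) has_vector_derivative F (Suc (length vs)) s z) (at s)"
      if "z \<in> angles" for s z
      using Cons.prems that by (intro deriv) auto
    show "continuous_on angles (\<lambda>z. of_real (sph_monomial vs z) :: complex)"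
      by (intro continuous_intros continuous_on_id)
    show "vanishes_with_weight (\<lambda>z. of_real (sph_monomial vs z)) (F (length vs))"
      using Cons by simp
  qed
  then show ?case
    by (simp add: sph_monomial_def mult.commute)
qed

lemma jointly_continuous_fdiff_funpow:
  assumes "jointly_continuous F"
  shows "jointly_continuous (\<lambda>s z. (fdiff h ^^ n) (\<lambda>\<sigma>. F \<sigma> z) s)"
proof (induction n)
  case 0
  then show ?case
    using assms by simp
next
  case (Suc n)
  let ?G = "\<lambda>s z. (fdiff h ^^ n) (\<lambda>\<sigma>. F \<sigma> z) s"
  have "continuous_on (UNIV \<times> angles) (\<lambda>p. ?G (fst p + h) (snd p) - ?G (fst p) (snd p))"
    by (intro continuous_intros jointly_continuous_compose[OF Suc.IH]) auto
  then show ?case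
    by (simp only: jointly_continuous_def case_prod_unfold fdiff_funpow_Suc)
qed

lemma sliding_integral_eq_shift: "sliding_integral h f s = integral {0..h} (\<lambda>\<tau>. f (s + \<tau>))"
  using integral_shift_Icc_real[of 0 h f s] by (simp add: sliding_integral_def o_def add.commute)

lemma jointly_continuous_sliding_integral:
  assumes "jointly_continuous F"
  shows "jointly_continuous (\<lambda>s z. sliding_integral h (\<lambda>\<sigma>. F \<sigma> z) s)"
proof -
  have "continuous_on ((UNIV \<times> angles) \<times> cbox 0 h) (\<lambda>(p, \<tau>). F (fst p + \<tau>) (snd p))"
    unfolding case_prod_beta by (intro jointly_continuous_compose[OF assms] continuous_intros) auto
  from integral_continuous_on_param[OF this] show ?thesis
    by (simp add: jointly_continuous_def case_prod_beta sliding_integral_eq_shift cbox_interval)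
qed

lemma sph_integral_integral_swap:
  fixes f :: "real \<times> real \<Rightarrow> real \<Rightarrow> complex"
  assumes "continuous_on (angles \<times> {0..h}) (\<lambda>(z, \<tau>). f z \<tau>)"
  shows "sph_integral (\<lambda>z. integral {0..h} (f z)) = integral {0..h} (\<lambda>\<tau>. sph_integral (\<lambda>z. f z \<tau>))"
proof -
  have "cbox ((0, 0), 0) ((pi, 2 * pi), h) = angles \<times> {0..h}"
    by (subst cbox_Pair_eq) (simp add: angles_def cbox_interval)
  then have "continuous_on (cbox ((0, 0), 0) ((pi, 2 * pi), h)) (\<lambda>(z, \<tau>). of_real (sin (fst z)) * f z \<tau>)"
    using assms unfolding case_prod_beta by (intro continuous_intros) auto
  from integral_swap_continuous[OF this] show ?thesis
    by (simp add: sph_integral_def angles_def cbox_interval flip: integral_mult_right)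
qed

text \<open>The sliding integral averages the vanishing integrals at the points \<open>x + \<tau> e\<^sub>0\<close>, where
  \<open>e\<^sub>0 = axis 1 1\<close> has \<open>e\<^sub>0 \<cdot> l = 1\<close> on the slice.\<close>

lemma vanishes_with_weight_sliding_integral:
  assumes F: "jointly_continuous F" and vanish: "vanishes_with_weight (\<lambda>_. 1) F"
  shows "vanishes_with_weight (\<lambda>_. 1) (\<lambda>s z. sliding_integral h (\<lambda>\<sigma>. F \<sigma> z) s)"
  unfolding vanishes_with_weight_def
proof
  fix x
  have "continuous_on (angles \<times> {0..h}) (\<lambda>(z, \<tau>). F (sph_dot x z + \<tau>) z)"
    unfolding case_prod_beta by (intro jointly_continuous_compose[OF F] continuous_intros) auto
  then have "sph_integral (\<lambda>z. sliding_integral h (\<lambda>\<sigma>. F \<sigma> z) (sph_dot x z))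
      = integral {0..h} (\<lambda>\<tau>. sph_integral (\<lambda>z. F (sph_dot x z + \<tau>) z))"
    unfolding sliding_integral_eq_shift by (rule sph_integral_integral_swap)
  also have "\<dots> = 0"
  proof -
    have "sph_integral (\<lambda>z. F (sph_dot x z + \<tau>) z) = 0" for \<tau>
      using vanish[unfolded vanishes_with_weight_def, rule_format, of "x + \<tau> *\<^sub>R axis 1 1"]
      by (simp add: sph_dot_add_scaleR sph_dot_axis_1)
    then show ?thesis
      by simp
  qed
  finally show "sph_integral (\<lambda>z. 1 * sliding_integral h (\<lambda>\<sigma>. F \<sigma> z) (sph_dot x z)) = 0"
    by simp
qed

text \<open>The differences \<open>\<Delta>\<^sub>h\<^sup>j\<close> of the \<open>(n - j)\<close>-fold sliding integrals of \<open>G\<close> form a chain of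
  derivatives ending in \<open>\<Delta>\<^sub>h\<^sup>n G\<close>; the sliding integrals replace the derivatives of \<open>G\<close>,
  which need not exist.\<close>

lemma vanishes_with_weight_fdiff_funpow:
  assumes G: "jointly_continuous G" and vanish: "vanishes_with_weight (\<lambda>_. 1) G" and h: "h \<ge> 0"
  shows "vanishes_with_weight (\<lambda>z. of_real (sph_monomial vs z))
    (\<lambda>s z. (fdiff h ^^ length vs) (\<lambda>\<sigma>. G \<sigma> z) s)"
proof -
  define n where "n = length vs"
  define S where "S j = (\<lambda>s z. (sliding_integral h ^^ j) (\<lambda>\<sigma>. G \<sigma> z) s)" for j
  define F where "F j s z = (fdiff h ^^ j) (\<lambda>\<sigma>. S (n - j) \<sigma> z) s" for j s z
  have S_Suc: "S (Suc j) = (\<lambda>s z. sliding_integral h (\<lambda>\<sigma>. S j \<sigma> z) s)" for j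
    by (simp add: S_def)
  have S: "jointly_continuous (S j) \<and> vanishes_with_weight (\<lambda>_. 1) (S j)" for j
  proof (induction j)
    case 0
    then show ?case
      using G vanish by (simp add: S_def)
  next
    case (Suc j)
    then show ?case
      unfolding S_Suc using jointly_continuous_sliding_integral vanishes_with_weight_sliding_integral by blast
  qed
  have "vanishes_with_weight (\<lambda>z. of_real (sph_monomial vs z)) (F (length vs))"
  proof (rule vanishes_with_weight_derivative_chain)
    show "jointly_continuous (F j)" for j
      unfolding F_def using S by (intro jointly_continuous_fdiff_funpow) blast
    show "vanishes_with_weight (\<lambda>_. 1) (F 0)"
      using S[of n] by (simp add: F_def[abs_def])
    show "((\<lambda>s. F j s z) has_vector_derivative F (Suc j) s z) (at s)" if "j < n" "z \<in> angles" for j s z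
    proof -
      have "S (n - j) s z = sliding_integral h (\<lambda>\<sigma>. S (n - Suc j) \<sigma> z) s" for s
        using \<open>j < n\<close> by (simp add: S_def Suc_diff_Suc[symmetric])
      moreover have "continuous_on UNIV (\<lambda>\<sigma>. S (n - Suc j) \<sigma> z)"
        using S \<open>z \<in> angles\<close> by (blast intro: jointly_continuous_slice_in_s)
      ultimately have "((\<lambda>s. S (n - j) s z) has_vector_derivative fdiff h (\<lambda>\<sigma>. S (n - Suc j) \<sigma> z) s) (at s)"
        for s using has_vector_derivative_sliding_integral[OF _ h] by simp
      from has_vector_derivative_fdiff_funpow[OF this] show ?thesis
        by (simp add: F_def funpow_Suc_right del: funpow.simps)
    qed
  qed (simp add: n_def)
  then show ?thesis
    by (simp add: F_def[abs_def] S_def n_def)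
qed

lemma sph_integral_fdiff_funpow:
  assumes G: "jointly_continuous G" and Q: "continuous_on angles Q"
  shows "(fdiff h ^^ n) (\<lambda>s. sph_integral (\<lambda>z. Q z * G s z)) s
    = sph_integral (\<lambda>z. Q z * (fdiff h ^^ n) (\<lambda>\<sigma>. G \<sigma> z) s)"
proof (induction n arbitrary: s)
  case 0
  then show ?case
    by simp
next
  case (Suc n)
  have "continuous_on angles (\<lambda>z. Q z * (fdiff h ^^ n) (\<lambda>\<sigma>. G \<sigma> z) t)" for t
    by (intro continuous_intros Q jointly_continuous_slice[OF jointly_continuous_fdiff_funpow[OF G]])
  then show ?case
    by (simp add: fdiff_funpow_Suc Suc.IH right_diff_distrib flip: sph_integral_diff del: funpow.simps)
qed

text \<open>Each moment of \<open>G(s, \<cdot>)\<close> against a product of linear forms \<open>v \<cdot> l\<close> is a continuous function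
  of \<open>s\<close> with vanishing higher differences (take \<open>x = s e\<^sub>0\<close>), hence a polynomial, of degree at most
  \<open>m\<close> by the growth bound.\<close>

lemma sph_moment_lagrange:
  assumes G: "jointly_continuous G" and vanish: "vanishes_with_weight (\<lambda>_. 1) G"
    and bound: "\<And>s z. z \<in> angles \<Longrightarrow> norm (G s z) \<le> K * (1 + \<bar>s\<bar>) ^ m"
  shows "sph_integral (\<lambda>z. of_real (sph_monomial vs z) * G s z) =
    (\<Sum>i<Suc m. sph_integral (\<lambda>z. of_real (sph_monomial vs z) * G (real i) z)
      * of_real (poly (lagrange_basis (Suc m) i) s))"
proof -
  let ?Q = "\<lambda>z. of_real (sph_monomial vs z) :: complex"
  have Q: "continuous_on angles ?Q"
    by (intro continuous_intros continuous_on_id)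
  obtain P where "P \<ge> 0" and P: "\<And>z. z \<in> angles \<Longrightarrow> norm (?Q z) \<le> P"
    using continuous_on_angles_bounded[OF Q] by blast
  define C where "C = Henstock_Kurzweil_Integration.content angles"
  show ?thesis
  proof (rule complex_fdiff_vanishing_bounded_imp_lagrange[where n = "length vs" and K = "P * K * C"])
    show "continuous_on UNIV (\<lambda>s. sph_integral (\<lambda>z. ?Q z * G s z))"
      using jointly_continuous_product[OF Q G] unfolding jointly_continuous_def
      by (rule continuous_on_sph_integral)
    show "(fdiff h ^^ length vs) (\<lambda>s. sph_integral (\<lambda>z. ?Q z * G s z)) s = 0" if "h > 0" for h s
      using vanishes_with_weight_fdiff_funpow[OF G vanish, of h vs] that
      unfolding sph_integral_fdiff_funpow[OF G Q] vanishes_with_weight_def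
      by (auto simp: sph_dot_scaleR sph_dot_axis_1 dest: spec[of _ "s *\<^sub>R axis 1 1"])
    show "norm (sph_integral (\<lambda>z. ?Q z * G s z)) \<le> P * K * C * (1 + \<bar>s\<bar>) ^ m" for s
    proof -
      have "norm (?Q z * G s z) \<le> P * (K * (1 + \<bar>s\<bar>) ^ m)" if "z \<in> angles" for z
        unfolding norm_mult using P[OF that] bound[OF that] \<open>P \<ge> 0\<close> by (intro mult_mono) auto
      from norm_sph_integral_le[OF _ this] show ?thesis
        by (simp add: C_def mult_ac continuous_intros Q jointly_continuous_slice[OF G])
    qed
  qed
qed

section \<open>Density of polynomials on the sphere\<close>

definition orthogonal_to_monomials :: "(real \<times> real \<Rightarrow> complex) \<Rightarrow> bool" where
  "orthogonal_to_monomials u \<longleftrightarrow>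
    continuous_on angles u \<and> (\<forall>vs. sph_integral (\<lambda>z. of_real (sph_monomial vs z) * u z) = 0)"

lemma bounded_linear_eq_mdot:
  fixes f :: "real^4 \<Rightarrow> real"
  assumes "bounded_linear f"
  obtains w where "\<And>l. f l = mdot w l"
proof
  fix l :: "real^4"
  have lin: "linear f"
    using assms by (rule bounded_linear.linear)
  have "f l = f (\<Sum>i\<in>UNIV. l $ i *s axis i 1)"
    by (simp only: basis_expansion)
  also have "\<dots> = (\<Sum>i\<in>UNIV. l $ i * f (axis i 1))"
    by (simp add: linear_sum[OF lin] scalar_mult_eq_scaleR linear_scale[OF lin])
  finally show "f l = mdot (vector [f (axis 1 1), - f (axis 2 1), - f (axis 3 1), - f (axis 4 1)]) l"
    by (simp add: sum_4 mdot_def vector_def algebra_simps)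
qed

lemma orthogonal_to_monomials_mult_monomial:
  assumes "orthogonal_to_monomials u"
  shows "orthogonal_to_monomials (\<lambda>z. of_real (sph_monomial ws z) * u z)"
proof -
  have "sph_monomial vs z * sph_monomial ws z = sph_monomial (vs @ ws) z" for vs z
    by (simp add: sph_monomial_def)
  then show ?thesis
    using assms unfolding orthogonal_to_monomials_def
    by (auto simp: mult.assoc[symmetric] simp flip: of_real_mult intro!: continuous_intros continuous_on_id)
qed

lemma orthogonal_to_monomials_mult_polynomial:
  assumes "real_polynomial_function g"
  shows "orthogonal_to_monomials u \<Longrightarrow> orthogonal_to_monomials (\<lambda>z. of_real (g (sph_pt z)) * u z)"
  using assms
proof (induction arbitrary: u)
  case (linear f)
  then obtain w where "\<And>l. f l = mdot w l"
    using bounded_linear_eq_mdot by blast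
  then show ?case
    using orthogonal_to_monomials_mult_monomial[OF linear.prems, of "[w]"]
    by (simp add: sph_monomial_def sph_dot_def)
next
  case (const c)
  then show ?case
    by (simp add: orthogonal_to_monomials_def mult.left_commute[of _ "of_real c"] sph_integral_cmult
        continuous_intros)
next
  case (add f g)
  then have "orthogonal_to_monomials (\<lambda>z. of_real (f (sph_pt z)) * u z)"
    "orthogonal_to_monomials (\<lambda>z. of_real (g (sph_pt z)) * u z)"
    by blast+
  then show ?case
    unfolding orthogonal_to_monomials_def
    by (auto simp: distrib_left distrib_right sph_integral_add continuous_intros)
next
  case (mult f g)
  then have "orthogonal_to_monomials (\<lambda>z. of_real (f (sph_pt z)) * (of_real (g (sph_pt z)) * u z))"
    by blast
  then show ?case
    by (simp add: mult.assoc)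
qed

lemma sph_integral_norm_square_eq_0:
  assumes u: "continuous_on angles u" and zero: "sph_integral (\<lambda>z. cnj (u z) * u z) = 0"
    and z: "z \<in> angles"
  shows "u z = 0"
proof -
  define v where "v z = sin (fst z) * (norm (u z))\<^sup>2" for z
  have v: "continuous_on (cbox (0, 0) (pi, 2 * pi)) v"
    using u unfolding v_def angles_def by (intro continuous_intros)
  have in_box: "0 < fst x \<and> fst x < pi" if "x \<in> box (0, 0) (pi, 2 * pi)" for x :: "real \<times> real"
    using that by (cases x) (auto simp: mem_box Basis_prod_def inner_prod_def)
  have box: "box (0, 0) (pi, 2 * pi) \<noteq> {}"
    using pi_gt3 by (auto simp: box_ne_empty Basis_prod_def inner_prod_def)
  have "cnj (u z) * u z = of_real ((norm (u z))\<^sup>2)" for z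
    by (subst complex_norm_square) (rule mult.commute)
  then have "complex_of_real (integral angles v) = sph_integral (\<lambda>z. cnj (u z) * u z)"
    using integral_linear[OF integrable_continuous[OF v] bounded_linear_of_real[where 'a = complex]]
    by (simp add: sph_integral_def v_def angles_def o_def)
  then have hv: "(v has_integral 0) (cbox (0, 0) (pi, 2 * pi))"
    using integrable_integral[OF integrable_continuous[OF v]] zero by (simp add: angles_def)
  have v0: "v x = 0" if "x \<in> cbox (0, 0) (pi, 2 * pi)" for x
  proof (rule has_integral_0_cbox_imp_0[OF v _ hv box that])
    fix y assume "y \<in> box (0, 0) (pi, 2 * pi)"
    then show "0 \<le> v y"
      using in_box[of y] by (simp add: v_def sin_ge_zero)
  qed
  have "u x = 0" if "x \<in> box (0, 0) (pi, 2 * pi)" for x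
  proof -
    have "sin (fst x) > 0"
      using in_box[OF that] by (intro sin_gt_zero) auto
    moreover have "v x = 0"
      using v0 that box_subset_cbox by blast
    ultimately show ?thesis
      by (simp add: v_def)
  qed
  moreover have "closure (box (0, 0) (pi, 2 * pi)) = angles"
    using box by (simp add: closure_box angles_def)
  ultimately show ?thesis
    using continuous_constant_on_closure[of "box (0, 0) (pi, 2 * pi)" u 0 z] u z by simp
qed

lemma sph_integral_polynomial_mult_eq_0:
  assumes "orthogonal_to_monomials u" "real_polynomial_function g"
  shows "sph_integral (\<lambda>z. of_real (g (sph_pt z)) * u z) = 0"
  using orthogonal_to_monomials_mult_polynomial[OF assms(2,1)]
  unfolding orthogonal_to_monomials_def by (auto simp: sph_monomial_def dest: spec[of _ "[]"])

lemma polynomial_approx_on_sphere: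
  assumes f: "continuous_on (sph_pt ` angles) f" and "d > 0"
  obtains g1 g2 where "real_polynomial_function g1" "real_polynomial_function g2"
    "\<And>z. z \<in> angles \<Longrightarrow> norm (f (sph_pt z) - (of_real (g1 (sph_pt z)) + \<i> * of_real (g2 (sph_pt z)))) < d"
proof -
  have K: "compact (sph_pt ` angles)"
    by (rule compact_continuous_image[OF continuous_on_sph_pt compact_angles])
  have "d / 2 > 0"
    using \<open>d > 0\<close> by simp
  obtain g1 where g1: "real_polynomial_function g1" "\<And>l. l \<in> sph_pt ` angles \<Longrightarrow> \<bar>Re (f l) - g1 l\<bar> < d / 2"
    using Stone_Weierstrass_real_polynomial_function[OF K _ \<open>d / 2 > 0\<close>, of "\<lambda>l. Re (f l)"] f
    by (auto intro: continuous_intros)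
  obtain g2 where g2: "real_polynomial_function g2" "\<And>l. l \<in> sph_pt ` angles \<Longrightarrow> \<bar>Im (f l) - g2 l\<bar> < d / 2"
    using Stone_Weierstrass_real_polynomial_function[OF K _ \<open>d / 2 > 0\<close>, of "\<lambda>l. Im (f l)"] f
    by (auto intro: continuous_intros)
  have "norm (f l - (of_real (g1 l) + \<i> * of_real (g2 l))) < d" if "l \<in> sph_pt ` angles" for l
  proof -
    have "f l - (of_real (g1 l) + \<i> * of_real (g2 l)) = of_real (Re (f l) - g1 l) + \<i> * of_real (Im (f l) - g2 l)"
      by (simp add: complex_eq_iff)
    then have "norm (f l - (of_real (g1 l) + \<i> * of_real (g2 l))) \<le> \<bar>Re (f l) - g1 l\<bar> + \<bar>Im (f l) - g2 l\<bar>"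
      by (metis norm_ii norm_mult norm_of_real mult_1 norm_triangle_ineq)
    then show ?thesis
      using g1(2)[OF that] g2(2)[OF that] by linarith
  qed
  with g1(1) g2(1) that show ?thesis
    by blast
qed

lemma norm_sph_integral_le_polynomial_approx:
  assumes O: "orthogonal_to_monomials u" and M: "\<And>z. z \<in> angles \<Longrightarrow> norm (u z) \<le> M"
    and v: "continuous_on angles v"
    and g: "real_polynomial_function g1" "real_polynomial_function g2"
    and approx: "\<And>z. z \<in> angles \<Longrightarrow> norm (v z - (of_real (g1 (sph_pt z)) + \<i> * of_real (g2 (sph_pt z)))) \<le> d"
  shows "norm (sph_integral (\<lambda>z. v z * u z)) \<le> d * M * Henstock_Kurzweil_Integration.content angles"
proof -
  have u: "continuous_on angles u"
    using O by (simp add: orthogonal_to_monomials_def)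
  have cg: "continuous_on angles (\<lambda>z. of_real (g (sph_pt z)) :: complex)" if "real_polynomial_function g" for g
    using continuous_on_compose2[OF continuous_on_polymonial_function[OF that[unfolded real_polynomial_function_eq]]
        continuous_on_sph_pt]
    by (auto intro: continuous_intros)
  define w where "w z = v z - (of_real (g1 (sph_pt z)) + \<i> * of_real (g2 (sph_pt z)))" for z
  have cw: "continuous_on angles (\<lambda>z. w z * u z)"
    unfolding w_def by (intro continuous_intros u v cg g)
  have c1: "continuous_on angles (\<lambda>z. of_real (g1 (sph_pt z)) * u z)"
    and c2: "continuous_on angles (\<lambda>z. \<i> * (of_real (g2 (sph_pt z)) * u z))"
    by (intro continuous_intros u cg g)+
  have "sph_integral (\<lambda>z. v z * u z)
      = sph_integral (\<lambda>z. w z * u z + (of_real (g1 (sph_pt z)) * u z + \<i> * (of_real (g2 (sph_pt z)) * u z)))"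
    by (simp add: w_def algebra_simps)
  also have "\<dots> = sph_integral (\<lambda>z. w z * u z)"
    using sph_integral_polynomial_mult_eq_0[OF O g(1)] sph_integral_polynomial_mult_eq_0[OF O g(2)]
    by (simp add: sph_integral_add[OF cw continuous_on_add[OF c1 c2]] sph_integral_add[OF c1 c2]
        sph_integral_cmult)
  also have "norm \<dots> \<le> d * M * Henstock_Kurzweil_Integration.content angles"
  proof (rule norm_sph_integral_le[OF cw])
    fix z assume z: "z \<in> angles"
    have "0 \<le> d"
      using order_trans[OF norm_ge_zero approx[OF z]] .
    then show "norm (w z * u z) \<le> d * M"
      unfolding norm_mult w_def using approx[OF z] M[OF z] by (intro mult_mono) auto
  qed
  finally show ?thesis .
qed

text \<open>Approximating \<open>cnj \<circ> f\<close> uniformly by polynomials shows that \<open>f\<close> is orthogonal to itself.\<close>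

lemma orthogonal_to_monomials_imp_zero:
  assumes f: "continuous_on (sph_pt ` angles) f"
    and orth: "\<And>vs. sph_integral (\<lambda>z. of_real (sph_monomial vs z) * f (sph_pt z)) = 0"
    and z: "z \<in> angles"
  shows "f (sph_pt z) = 0"
proof -
  define u where "u z = f (sph_pt z)" for z
  have u: "continuous_on angles u"
    unfolding u_def by (rule continuous_on_compose2[OF f continuous_on_sph_pt]) auto
  then have O: "orthogonal_to_monomials u"
    using orth by (simp add: orthogonal_to_monomials_def u_def)
  obtain M where "M \<ge> 0" and M: "\<And>z. z \<in> angles \<Longrightarrow> norm (u z) \<le> M"
    using continuous_on_angles_bounded[OF u] by blast
  define C where "C = Henstock_Kurzweil_Integration.content angles"
  have "norm (sph_integral (\<lambda>z. cnj (u z) * u z)) \<le> e" if "e > 0" for e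
  proof -
    define D where "D = (M + 1) * (C + 1)"
    define d where "d = e / D"
    have "C \<ge> 0"
      by (simp add: C_def)
    then have "D > 0"
      using \<open>M \<ge> 0\<close> unfolding D_def by (intro mult_pos_pos) auto
    then have "d > 0"
      using \<open>e > 0\<close> by (simp add: d_def)
    have "continuous_on (sph_pt ` angles) (\<lambda>l. cnj (f l))"
      using f by (intro continuous_intros)
    then obtain g1 g2 where g: "real_polynomial_function g1" "real_polynomial_function g2"
      and approx: "\<And>z. z \<in> angles \<Longrightarrow> norm (cnj (u z) - (of_real (g1 (sph_pt z)) + \<i> * of_real (g2 (sph_pt z)))) < d"
      using polynomial_approx_on_sphere[OF _ \<open>d > 0\<close>] unfolding u_def by metis
    have "norm (sph_integral (\<lambda>z. cnj (u z) * u z)) \<le> d * M * C"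
      unfolding C_def using approx
      by (intro norm_sph_integral_le_polynomial_approx[OF O M _ g] continuous_intros u less_imp_le)
    also have "\<dots> \<le> d * D"
      unfolding mult.assoc D_def using \<open>d > 0\<close> \<open>M \<ge> 0\<close> \<open>C \<ge> 0\<close> by (intro mult_left_mono mult_mono) auto
    also have "\<dots> = e"
      using \<open>D > 0\<close> by (simp add: d_def)
    finally show ?thesis .
  qed
  then have "sph_integral (\<lambda>z. cnj (u z) * u z) = 0"
    by (metis dense_ge norm_le_zero_iff)
  from sph_integral_norm_square_eq_0[OF u this z] show ?thesis
    by (simp add: u_def)
qed

section \<open>Polynomial dependence on \<open>s\<close>\<close>

text \<open>By \<open>sph_moment_lagrange\<close>, \<open>\<Sigma>(s, \<cdot>)\<close> minus its Lagrange interpolant in \<open>s\<close> is orthogonal to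
  all products of linear forms, hence zero.\<close>

lemma sph_polynomial_in_s:
  fixes \<Sigma> :: "real \<Rightarrow> real^4 \<Rightarrow> complex"
  assumes cont: "continuous_on (UNIV \<times> future_null) (\<lambda>(s, l). \<Sigma> s l)"
    and vanish: "\<And>x. sph_integral (\<lambda>z. \<Sigma> (sph_dot x z) (sph_pt z)) = 0"
    and bound: "\<And>s z. z \<in> angles \<Longrightarrow> norm (\<Sigma> s (sph_pt z)) \<le> K * (1 + \<bar>s\<bar>) ^ m"
    and z: "z \<in> angles"
  shows "\<Sigma> s (sph_pt z) = (\<Sum>i<Suc m. \<Sigma> (real i) (sph_pt z) * of_real (poly (lagrange_basis (Suc m) i) s))"
proof -
  define G where "G s z = \<Sigma> s (sph_pt z)" for s z
  have G: "jointly_continuous G"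
    unfolding jointly_continuous_def G_def case_prod_beta
    by (rule continuous_on_compose_pair[OF cont])
      (auto intro!: continuous_intros continuous_on_compose2[OF continuous_on_sph_pt] simp: sph_pt_future_null)
  have "vanishes_with_weight (\<lambda>_. 1) G"
    using vanish by (simp add: vanishes_with_weight_def G_def)
  note moment = sph_moment_lagrange[OF G this, of K m, unfolded G_def]
  define c where "c i = complex_of_real (poly (lagrange_basis (Suc m) i) s)" for i
  define f where "f l = \<Sigma> s l - (\<Sum>i<Suc m. \<Sigma> (real i) l * c i)" for l
  have cont_slice: "continuous_on (sph_pt ` angles) (\<Sigma> t)" for t
    by (rule continuous_on_compose_pair[OF cont]) (auto intro: continuous_intros simp: sph_pt_future_null)
  have "f (sph_pt z) = 0"
  proof (rule orthogonal_to_monomials_imp_zero[OF _ _ z])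
    show "continuous_on (sph_pt ` angles) f"
      unfolding f_def by (intro continuous_intros cont_slice)
    fix vs
    let ?Q = "\<lambda>z. of_real (sph_monomial vs z) :: complex"
    have cQ: "continuous_on angles (\<lambda>z. ?Q z * \<Sigma> t (sph_pt z))" for t
      by (intro continuous_intros continuous_on_id continuous_on_compose2[OF cont_slice continuous_on_sph_pt])
        auto
    have sum: "sph_integral (\<lambda>z. \<Sum>i<Suc m. c i * (?Q z * \<Sigma> (real i) (sph_pt z)))
        = (\<Sum>i<Suc m. c i * sph_integral (\<lambda>z. ?Q z * \<Sigma> (real i) (sph_pt z)))"
      by (subst sph_integral_sum) (auto intro: continuous_intros cQ simp: sph_integral_cmult)
    have "sph_integral (\<lambda>z. ?Q z * f (sph_pt z))
        = sph_integral (\<lambda>z. ?Q z * \<Sigma> s (sph_pt z) - (\<Sum>i<Suc m. c i * (?Q z * \<Sigma> (real i) (sph_pt z))))"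
      by (simp add: f_def algebra_simps sum_distrib_left)
    also have "\<dots> = sph_integral (\<lambda>z. ?Q z * \<Sigma> s (sph_pt z))
        - (\<Sum>i<Suc m. c i * sph_integral (\<lambda>z. ?Q z * \<Sigma> (real i) (sph_pt z)))"
      unfolding sum[symmetric] by (rule sph_integral_diff) (intro continuous_intros cQ)+
    also have "\<dots> = 0"
      using moment[OF bound, of vs s] by (simp add: c_def mult.commute)
    finally show "sph_integral (\<lambda>z. ?Q z * f (sph_pt z)) = 0" .
  qed
  then show ?thesis
    by (simp add: f_def c_def)
qed

text \<open>\<open>F j\<close> below is the \<open>j\<close>-th \<open>s\<close>-derivative of \<open>\<Sum>\<^sub>k s\<^sup>k G\<^sub>k\<close>; at \<open>s = 0\<close> only \<open>j! G\<^sub>j\<close> survives.\<close>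

lemma sph_moments_vanish:
  assumes G: "\<And>k. continuous_on angles (G k)"
    and vanish: "vanishes_with_weight (\<lambda>_. 1) (\<lambda>s z. \<Sum>k\<le>m. of_real (s ^ k) * G k z)"
    and "length vs \<le> m"
  shows "sph_integral (\<lambda>z. of_real (sph_monomial vs z) * G (length vs) z) = 0"
proof -
  define F where "F j s z = (\<Sum>k\<le>m. of_real (poly ((pderiv ^^ j) (monom 1 k)) s) * G k z)" for j s z
  have V: "vanishes_with_weight (\<lambda>z. of_real (sph_monomial vs z)) (F (length vs))"
  proof (rule vanishes_with_weight_derivative_chain[OF _ _ _ \<open>length vs \<le> m\<close>])
    show "jointly_continuous (F j)" for j
      unfolding F_def jointly_continuous_def case_prod_beta
      by (intro continuous_intros continuous_on_compose2[OF G continuous_on_snd]) auto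
    show "((\<lambda>s. F j s z) has_vector_derivative F (Suc j) s z) (at s)" for j s z
      unfolding F_def
      by (intro has_vector_derivative_sum has_vector_derivative_mult_left
          bounded_linear.has_vector_derivative[OF bounded_linear_of_real])
        (simp add: has_real_derivative_iff_has_vector_derivative[symmetric])
    show "vanishes_with_weight (\<lambda>_. 1) (F 0)"
      using vanish by (simp add: F_def[abs_def] poly_monom)
  qed
  have F0: "F (length vs) 0 z = of_real (fact (length vs)) * G (length vs) z" for z
  proof -
    have pd: "poly ((pderiv ^^ length vs) (monom 1 k)) 0 = (if k = length vs then fact (length vs) else 0)" for k
      by (simp add: poly_0_coeff_0 coeff_higher_pderiv pochhammer_fact)
    have "F (length vs) 0 z = (\<Sum>k\<le>m. if k = length vs then of_real (fact (length vs)) * G k z else 0)"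
      unfolding F_def pd by (intro sum.cong) auto
    then show ?thesis
      using \<open>length vs \<le> m\<close> by simp
  qed
  have "sph_dot 0 z = 0" for z
    by (simp add: sph_dot_def mdot_def)
  moreover have "sph_integral (\<lambda>z. of_real (sph_monomial vs z) * F (length vs) (sph_dot 0 z) z) = 0"
    using V unfolding vanishes_with_weight_def by blast
  ultimately have "sph_integral (\<lambda>z. of_real (sph_monomial vs z) * (of_real (fact (length vs)) * G (length vs) z)) = 0"
    by (simp only: F0)
  then show ?thesis
    by (simp add: sph_integral_cmult mult.left_commute[of "of_real (sph_monomial vs _)"])
qed

section \<open>Homogeneity and the main theorem\<close>

lemma mdot_scaleR_right: "mdot x (c *\<^sub>R l) = c * mdot x l"
  by (simp add: mdot_def algebra_simps)

lemma future_null_scaleR: "l \<in> future_null \<Longrightarrow> c > 0 \<Longrightarrow> c *\<^sub>R l \<in> future_null"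
  by (simp add: future_null_def mdot_def algebra_simps)

text \<open>With \<open>t = (t\<^sub>0, t')\<close> and \<open>l = (1, n)\<close>, \<open>|n| = 1\<close>: by Cauchy-Schwarz \<open>|t' \<cdot> n|\<^sup>2 \<le> t\<^sub>0\<^sup>2 - 1\<close>,
  so \<open>t \<cdot> l = t\<^sub>0 - t' \<cdot> n\<close> has \<open>(t \<cdot> l)(t\<^sub>0 + t' \<cdot> n) \<ge> 1\<close>.\<close>

lemma mdot_unit_timelike_lower_bound:
  assumes t: "unit_future_timelike t" and l: "l \<in> future_null" "l $ 1 = 1"
  shows "mdot t l \<ge> 1 / (2 * t $ 1)"
proof -
  have t1: "t $ 1 > 0" and tt: "(t $ 2)\<^sup>2 + (t $ 3)\<^sup>2 + (t $ 4)\<^sup>2 = (t $ 1)\<^sup>2 - 1"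
    using t unfolding unit_future_timelike_def mdot_def by (auto simp: power2_eq_square)
  have ll: "(l $ 2)\<^sup>2 + (l $ 3)\<^sup>2 + (l $ 4)\<^sup>2 = 1"
    using l unfolding future_null_def mdot_def by (auto simp: power2_eq_square)
  define w where "w = t $ 2 * l $ 2 + t $ 3 * l $ 3 + t $ 4 * l $ 4"
  have "((t $ 2)\<^sup>2 + (t $ 3)\<^sup>2 + (t $ 4)\<^sup>2) * ((l $ 2)\<^sup>2 + (l $ 3)\<^sup>2 + (l $ 4)\<^sup>2) - w\<^sup>2 =
      (t $ 2 * l $ 3 - t $ 3 * l $ 2)\<^sup>2 + (t $ 2 * l $ 4 - t $ 4 * l $ 2)\<^sup>2 + (t $ 3 * l $ 4 - t $ 4 * l $ 3)\<^sup>2"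
    unfolding w_def by algebra
  then have "w\<^sup>2 \<le> (t $ 1)\<^sup>2 - 1"
    unfolding tt ll by (smt (verit) zero_le_power2)
  then have prod: "(t $ 1 - w) * (t $ 1 + w) \<ge> 1" and "\<bar>w\<bar> < t $ 1"
    using t1 by (auto simp: algebra_simps power2_eq_square abs_less_iff intro: power2_less_imp_less)
  then have "0 < t $ 1 + w" "t $ 1 + w \<le> 2 * t $ 1"
    by auto
  then have "1 / (2 * t $ 1) \<le> 1 / (t $ 1 + w)"
    by (intro divide_left_mono) auto
  also have "\<dots> \<le> t $ 1 - w"
    using prod \<open>0 < t $ 1 + w\<close> by (simp add: divide_le_eq)
  also have "t $ 1 - w = mdot t l"
    using l(2) by (simp add: mdot_def w_def)
  finally show ?thesis .
qed

lemma homogeneous_rescale: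
  fixes \<Sigma> :: "real \<Rightarrow> real^4 \<Rightarrow> complex"
  assumes homog: "\<And>c s l. c > 0 \<Longrightarrow> l \<in> future_null \<Longrightarrow>
                  \<Sigma> (c * s) (c *\<^sub>R l) = complex_of_real (c powr -2) * \<Sigma> s l"
    and l: "l \<in> future_null" and c: "c > 0"
  shows "\<Sigma> s l = of_real (c powr -2) * \<Sigma> (s / c) ((1 / c) *\<^sub>R l)"
  using homog[OF c future_null_scaleR[OF l, of "1 / c"], of "s / c"] c by simp

lemma growth_bound_on_sphere:
  fixes \<Sigma> :: "real \<Rightarrow> real^4 \<Rightarrow> complex"
  assumes homog: "\<And>c s l. c > 0 \<Longrightarrow> l \<in> future_null \<Longrightarrow>
                  \<Sigma> (c * s) (c *\<^sub>R l) = complex_of_real (c powr -2) * \<Sigma> s l"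
    and t: "unit_future_timelike t"
    and bound: "\<And>s l. l \<in> future_null \<Longrightarrow> mdot t l = 1 \<Longrightarrow> norm (\<Sigma> s l) \<le> poly p s"
  shows "norm (\<Sigma> s (sph_pt z))
    \<le> (2 * t $ 1)\<^sup>2 * (\<Sum>i\<le>degree p. \<bar>coeff p i\<bar>) * (1 + 2 * t $ 1) ^ degree p * (1 + \<bar>s\<bar>) ^ degree p"
proof -
  define T where "T = 2 * t $ 1"
  define c where "c = mdot t (sph_pt z)"
  have "T > 0"
    using t by (simp add: T_def unit_future_timelike_def)
  have "c \<ge> 1 / T"
    unfolding c_def T_def by (rule mdot_unit_timelike_lower_bound[OF t sph_pt_future_null]) simp
  moreover have "0 < 1 / T"
    using \<open>T > 0\<close> by simp
  ultimately have "c > 0"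
    by linarith
  then have "1 / c \<le> T"
    using \<open>c \<ge> 1 / T\<close> \<open>T > 0\<close> by (simp add: field_simps)
  define l where "l = (1 / c) *\<^sub>R sph_pt z"
  have l: "l \<in> future_null" "mdot t l = 1"
    using \<open>c > 0\<close> sph_pt_future_null[of z] by (simp_all add: l_def future_null_scaleR mdot_scaleR_right c_def)
  have "1 + \<bar>s / c\<bar> \<le> (1 + T) * (1 + \<bar>s\<bar>)"
    using \<open>1 / c \<le> T\<close> \<open>c > 0\<close> \<open>T > 0\<close> mult_left_mono[OF \<open>1 / c \<le> T\<close> abs_ge_zero[of s]]
    by (simp add: abs_divide algebra_simps)
  have "norm (\<Sigma> s (sph_pt z)) = (1 / c)\<^sup>2 * norm (\<Sigma> (s / c) l)"
  proof -
    have cpow: "c powr -2 = (1 / c)\<^sup>2"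
      using \<open>c > 0\<close> by (simp add: powr_minus powr_realpow power_one_over inverse_eq_divide)
    have "\<Sigma> s (sph_pt z) = of_real (c powr -2) * \<Sigma> (s / c) l"
      unfolding l_def by (rule homogeneous_rescale[OF homog sph_pt_future_null \<open>c > 0\<close>])
    then show ?thesis
      by (simp only: norm_mult norm_of_real cpow abs_power2)
  qed
  also have "\<dots> \<le> T\<^sup>2 * ((\<Sum>i\<le>degree p. \<bar>coeff p i\<bar>) * (1 + \<bar>s / c\<bar>) ^ degree p)"
    using bound[OF l, of "s / c"] abs_poly_le_coeff_sum[of p "s / c"] \<open>1 / c \<le> T\<close> \<open>c > 0\<close>
    by (intro mult_mono power_mono) auto
  also have "\<dots> \<le> T\<^sup>2 * ((\<Sum>i\<le>degree p. \<bar>coeff p i\<bar>) * ((1 + T) * (1 + \<bar>s\<bar>)) ^ degree p)"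
    using \<open>1 + \<bar>s / c\<bar> \<le> (1 + T) * (1 + \<bar>s\<bar>)\<close>
    by (intro mult_left_mono power_mono sum_nonneg) auto
  finally show ?thesis
    by (simp add: T_def power_mult_distrib mult_ac)
qed

lemma sph_vanishing_of_null_int:
  fixes \<Sigma> :: "real \<Rightarrow> real^4 \<Rightarrow> complex"
  assumes cont: "continuous_on (UNIV \<times> future_null) (\<lambda>(s, l). \<Sigma> s l)"
    and vanish: "\<And>x. null_int (\<lambda>l. \<Sigma> (mdot x l) l) = 0"
  shows "sph_integral (\<lambda>z. \<Sigma> (sph_dot x z) (sph_pt z)) = 0"
  using vanish[of x] null_int_eq_sph_integral[of "\<lambda>l. \<Sigma> (mdot x l) l"]
    continuous_on_compose_sph_pt[OF cont continuous_on_sph_dot[OF continuous_on_id, of _ x]]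
  by (simp add: sph_dot_def)

lemma power_expansion_on_slice:
  fixes \<Sigma> :: "real \<Rightarrow> real^4 \<Rightarrow> complex"
  assumes cont: "continuous_on (UNIV \<times> future_null) (\<lambda>(s, l). \<Sigma> s l)"
    and vanish: "\<And>x. null_int (\<lambda>l. \<Sigma> (mdot x l) l) = 0"
    and bound: "\<And>s z. norm (\<Sigma> s (sph_pt z)) \<le> K * (1 + \<bar>s\<bar>) ^ m"
    and l: "l \<in> future_null" "l $ 1 = 1"
  shows "\<Sigma> s l = (\<Sum>k\<le>m. of_real (s ^ k) * interpolant_coeff \<Sigma> m k l)"
proof -
  obtain z where "z \<in> angles" "sph_pt z = l"
    using sph_pt_surj[OF l] .
  then show ?thesis
    using sph_polynomial_in_s[OF cont sph_vanishing_of_null_int[OF cont vanish] bound \<open>z \<in> angles\<close>, where s = s]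
    by (simp only: lagrange_sum_eq_power_sum)
qed

lemma homogeneous_power_expansion:
  fixes \<Sigma> :: "real \<Rightarrow> real^4 \<Rightarrow> complex"
  assumes homog: "\<And>c s l. c > 0 \<Longrightarrow> l \<in> future_null \<Longrightarrow>
                  \<Sigma> (c * s) (c *\<^sub>R l) = complex_of_real (c powr -2) * \<Sigma> s l"
    and slice: "\<And>s l. l \<in> future_null \<Longrightarrow> l $ 1 = 1 \<Longrightarrow> \<Sigma> s l = (\<Sum>k\<le>m. of_real (s ^ k) * \<Gamma> k l)"
    and l: "l \<in> future_null"
  shows "\<Sigma> s l = (\<Sum>k\<le>m. of_real (s ^ k) * (of_real (l $ 1 powr (-2 - real k)) * \<Gamma> k ((1 / l $ 1) *\<^sub>R l)))"
proof -
  define c where "c = l $ 1"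
  have "c > 0"
    using l by (simp add: future_null_def c_def)
  have "(1 / c) *\<^sub>R l \<in> future_null" "((1 / c) *\<^sub>R l) $ 1 = 1"
    using l \<open>c > 0\<close> by (simp_all add: future_null_scaleR c_def)
  then have "\<Sigma> s l = of_real (c powr -2) * (\<Sum>k\<le>m. of_real ((s / c) ^ k) * \<Gamma> k ((1 / c) *\<^sub>R l))"
    using homogeneous_rescale[OF homog l \<open>c > 0\<close>] slice by simp
  also have "\<dots> = (\<Sum>k\<le>m. of_real (s ^ k) * (of_real (c powr (-2 - real k)) * \<Gamma> k ((1 / c) *\<^sub>R l)))"
    unfolding sum_distrib_left
  proof (rule sum.cong[OF refl])
    fix k
    have "c powr -2 * (s / c) ^ k = s ^ k * c powr (-2 - real k)"
      using \<open>c > 0\<close> by (simp add: powr_diff powr_realpow power_divide)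
    then show "of_real (c powr -2) * (of_real ((s / c) ^ k) * \<Gamma> k ((1 / c) *\<^sub>R l))
        = of_real (s ^ k) * (of_real (c powr (-2 - real k)) * \<Gamma> k ((1 / c) *\<^sub>R l))"
      by (simp only: mult.assoc[symmetric] of_real_mult[symmetric])
  qed
  finally show ?thesis
    by (simp add: c_def)
qed

lemma null_int_moments_vanish:
  fixes \<Sigma> :: "real \<Rightarrow> real^4 \<Rightarrow> complex" and G :: "nat \<Rightarrow> real^4 \<Rightarrow> complex"
  assumes cont: "continuous_on (UNIV \<times> future_null) (\<lambda>(s, l). \<Sigma> s l)"
    and vanish: "\<And>x. null_int (\<lambda>l. \<Sigma> (mdot x l) l) = 0"
    and G: "\<And>k. continuous_on angles (\<lambda>z. G k (sph_pt z))"
    and expansion: "\<And>s l. l \<in> future_null \<Longrightarrow> \<Sigma> s l = (\<Sum>k\<le>m. of_real (s ^ k) * G k l)"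
    and "k \<le> m"
  shows "null_int (\<lambda>l. of_real (\<Prod>i<k. lower l (a i)) * G k l) = 0"
proof -
  define vs where "vs = map (\<lambda>i. axis (a i) (1 :: real)) [0..<k]"
  have "(\<lambda>s z. \<Sum>k\<le>m. of_real (s ^ k) * G k (sph_pt z)) = (\<lambda>s z. \<Sigma> s (sph_pt z))"
    using expansion[OF sph_pt_future_null] by (simp add: fun_eq_iff)
  then have "vanishes_with_weight (\<lambda>_. 1) (\<lambda>s z. \<Sum>k\<le>m. of_real (s ^ k) * G k (sph_pt z))"
    using sph_vanishing_of_null_int[OF cont vanish] by (simp add: vanishes_with_weight_def)
  from sph_moments_vanish[where G = "\<lambda>k z. G k (sph_pt z)", OF G this, of vs] \<open>k \<le> m\<close>
  have "sph_integral (\<lambda>z. of_real (\<Prod>i<k. lower (sph_pt z) (a i)) * G k (sph_pt z)) = 0"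
    by (simp add: vs_def sph_monomial_axes)
  moreover have "continuous_on angles (\<lambda>z. \<Prod>i<k. lower (sph_pt z) (a i))"
    using continuous_on_sph_monomial[OF continuous_on_id, of angles vs] by (simp add: vs_def sph_monomial_axes)
  then have "continuous_on angles (\<lambda>z. of_real (\<Prod>i<k. lower (sph_pt z) (a i)) * G k (sph_pt z))"
    by (intro continuous_on_mult continuous_on_of_real G)
  ultimately show ?thesis
    by (simp add: null_int_eq_sph_integral)
qed

theorem lemma2p3:
  fixes \<Sigma> :: "real \<Rightarrow> real^4 \<Rightarrow> complex"
  assumes cont: "continuous_on (UNIV \<times> future_null) (\<lambda>(s, l). \<Sigma> s l)"
    and homog: "\<And>c s l. c > 0 \<Longrightarrow> l \<in> future_null \<Longrightarrow>
                  \<Sigma> (c * s) (c *\<^sub>R l) = complex_of_real (c powr -2) * \<Sigma> s l"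
    and bound: "\<exists>t p. unit_future_timelike t \<and>
                  (\<forall>s l. l \<in> future_null \<longrightarrow> mdot t l = 1 \<longrightarrow> norm (\<Sigma> s l) \<le> poly p s)"
    and vanish: "\<And>x. null_int (\<lambda>l. \<Sigma> (mdot x l) l) = 0"
  shows "\<exists>N::nat. \<exists>\<Sigma>k :: nat \<Rightarrow> real^4 \<Rightarrow> complex.
           (\<forall>s l. l \<in> future_null \<longrightarrow> \<Sigma> s l = (\<Sum>k\<le>N. complex_of_real (s ^ k) * \<Sigma>k k l)) \<and>
           (\<forall>k\<le>N. \<forall>a :: nat \<Rightarrow> 4.
              null_int (\<lambda>l. complex_of_real (\<Prod>i<k. lower l (a i)) * \<Sigma>k k l) = 0)"
proof -
  obtain t p where t: "unit_future_timelike t"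
    and p: "\<And>s l. l \<in> future_null \<Longrightarrow> mdot t l = 1 \<Longrightarrow> norm (\<Sigma> s l) \<le> poly p s"
    using bound by blast
  define m where "m = degree p"
  note slice = power_expansion_on_slice[OF cont vanish growth_bound_on_sphere[OF homog t p, folded m_def]]
  define \<Sigma>k where "\<Sigma>k k l = of_real (l $ 1 powr (-2 - real k)) * interpolant_coeff \<Sigma> m k ((1 / l $ 1) *\<^sub>R l)"
    for k l
  have expansion: "\<Sigma> s l = (\<Sum>k\<le>m. of_real (s ^ k) * \<Sigma>k k l)" if "l \<in> future_null" for s l
    unfolding \<Sigma>k_def by (rule homogeneous_power_expansion[OF homog slice that])
  have "continuous_on angles (\<lambda>z. \<Sigma>k k (sph_pt z))" for k
    by (simp add: \<Sigma>k_def interpolant_coeff_def continuous_on_compose_sph_pt[OF cont] continuous_intros)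
  with null_int_moments_vanish[OF cont vanish _ expansion] show ?thesis
    using expansion by blast
qed

end
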